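(* Let $n\ge 2$, let $\gamma$ be an admissible Jordan arc, and let $f:\gamma\to\mathbb{C}$ be such that $f^{(n+1)}$ exists and is continuous on $\gamma$. Then for every $k=1,2,\dots,n-1$ and all $z_1\ne z_2$ in $\gamma$, \[ |d_1^{\,k}(f\,|\,z_1,z_2)|\le\frac{C_{\gamma,k}}{k+1}, \] where \[ C_{\gamma,k}=\sup_{z\in\gamma}|f^{(k+1)}(z)|+\sup_{z_1,z_2\in\gamma,\ z_1\ne z_2}\left|\frac{\int_{z_2}^{z_1}(z-z_2)^{k+1}f^{(k+2)}(z)\,dz}{(z_1-z_2)^{k+1}}\right| \] is finite and depends only on $f,\gamma,k$.
   Context: A Jordan arc is the image of $[0,1]$ under a homeomorphism into $\mathbb{C}$; it is admissible if it is the image of a parametrization $\phi\in C^1([0,1])$ with $\phi'(t)\ne0$ for all $t\in[0,1]$ (one-sided at endpoints). For $g$ on $\gamma$, $g'(z_1)=\lim_{z\to z_1,\,z\in\gamma}\frac{g(z)-g(z_1)}{z-z_1}$; higher derivatives $g^{(k)}$ are defined inductively. For $z_1=\phi(t_1),z_2=\phi(t_2)$, $\int_{z_2}^{z_1}g(z)\,dz:=\int_{t_2}^{t_1}g(\phi(t))\phi'(t)\,dt$. $d_1(f\,|\,z_1,z_2)=\frac{f(z_1)-f(z_2)}{z_1-z_2}$ and $d_1^{\,k}(f\,|\,z_1,z_2)$ is its $k$-th derivative along $\gamma$ with respect to $z_1$. *)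

theory Defs
  imports "HOL-Analysis.Analysis"
begin

text \<open>Admissible parametrization: phi is C^1 on [0,1] (one-sided derivatives at the
endpoints), with nonvanishing derivative, and injective on [0,1] (a continuous injection
of the compact interval is a homeomorphism onto its image, i.e. a Jordan arc).\<close>
definition admissible_param :: "(real \<Rightarrow> complex) \<Rightarrow> bool" where
  "admissible_param \<phi> \<longleftrightarrow> inj_on \<phi> {0..1} \<and>
     (\<exists>\<phi>'. continuous_on {0..1} \<phi>' \<and>
        (\<forall>t\<in>{0..1}. (\<phi> has_vector_derivative \<phi>' t) (at t within {0..1}) \<and> \<phi>' t \<noteq> 0))"

fun arc_deriv :: "complex set \<Rightarrow> nat \<Rightarrow> (complex \<Rightarrow> complex) \<Rightarrow> complex \<Rightarrow> complex" where
  "arc_deriv S 0 g = g"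
| "arc_deriv S (Suc k) g =
     (\<lambda>z. Lim (at z within S) (\<lambda>w. (arc_deriv S k g w - arc_deriv S k g z) / (w - z)))"

definition arc_deriv_exists_upto :: "complex set \<Rightarrow> nat \<Rightarrow> (complex \<Rightarrow> complex) \<Rightarrow> bool" where
  "arc_deriv_exists_upto S m g \<longleftrightarrow>
     (\<forall>k<m. \<forall>z\<in>S. \<exists>D. ((\<lambda>w. (arc_deriv S k g w - arc_deriv S k g z) / (w - z)) \<longlongrightarrow> D)
                            (at z within S))"

definition oriented_integral :: "real \<Rightarrow> real \<Rightarrow> (real \<Rightarrow> complex) \<Rightarrow> complex" where
  "oriented_integral a b h = (if a \<le> b then integral {a..b} h else - integral {b..a} h)"

definition arc_param :: "(real \<Rightarrow> complex) \<Rightarrow> complex \<Rightarrow> real" where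
  "arc_param \<phi> z = (THE t. t \<in> {0..1} \<and> \<phi> t = z)"

text \<open>int_{z2}^{z1} g(z) dz := int_{t2}^{t1} g(phi t) phi'(t) dt.\<close>
definition arc_integral :: "(real \<Rightarrow> complex) \<Rightarrow> (complex \<Rightarrow> complex) \<Rightarrow> complex \<Rightarrow> complex \<Rightarrow> complex" where
  "arc_integral \<phi> g z2 z1 =
     oriented_integral (arc_param \<phi> z2) (arc_param \<phi> z1)
       (\<lambda>t. g (\<phi> t) * vector_derivative \<phi> (at t within {0..1}))"

text \<open>d_1(f | z1, z2) as a function of z1.\<close>
definition d1 :: "(complex \<Rightarrow> complex) \<Rightarrow> complex \<Rightarrow> complex \<Rightarrow> complex" where
  "d1 f z2 z1 = (f z1 - f z2) / (z1 - z2)"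

definition d1k :: "complex set \<Rightarrow> nat \<Rightarrow> (complex \<Rightarrow> complex) \<Rightarrow> complex \<Rightarrow> complex \<Rightarrow> complex" where
  "d1k S k f z1 z2 = arc_deriv S k (d1 f z2) z1"

end

theory Submission
  imports Defs
begin

(* Differentiating (z1 - z2) * d1(f | z1, z2) = f z1 - f z2 along the arc gives
   (z1 - z2) * d1^(k+1) = f^(k+1) - (k+1) * d1^k, which unrolls to a Taylor expansion of f z2 about
   z1 with remainder (z2 - z1)^(k+1) * d1^k / k!. Comparing it with the integral form of the
   remainder of order k+1 yields
     (k+1) * d1^k(f | z1, z2) = f^(k+1)(z1) - (int_{z2}^{z1} (z - z2)^(k+1) f^(k+2)(z) dz) / (z1 - z2)^(k+1),
   and the estimate is the triangle inequality. The second supremum is finite because an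
   admissible parametrization is bi-Lipschitz: the integral is O(|t1 - t2|^(k+2)), while
   |z1 - z2|^(k+1) is at least a multiple of |t1 - t2|^(k+1). *)

section \<open>Chord estimates for \<open>C\<^sup>1\<close> parametrizations\<close>

lemma continuous_on_compact_pos_lower_bound:
  fixes g :: "'a::topological_space \<Rightarrow> real"
  assumes "compact K" "continuous_on K g" "\<And>x. x \<in> K \<Longrightarrow> 0 < g x"
  obtains c where "0 < c" "\<And>x. x \<in> K \<Longrightarrow> c \<le> g x"
proof (cases "K = {}")
  case False
  then obtain x0 where "x0 \<in> K" "\<And>x. x \<in> K \<Longrightarrow> g x0 \<le> g x"
    using continuous_attains_inf[OF assms(1)] assms(2) by blast
  then show ?thesis using that assms(3) by blast
qed (use that[of 1] in auto)

lemma vector_derivative_lipschitz: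
  fixes \<phi> :: "real \<Rightarrow> 'a::real_normed_vector"
  assumes "\<And>t. t \<in> {a..b} \<Longrightarrow> (\<phi> has_vector_derivative \<phi>' t) (at t within {a..b})"
    and "\<And>t. t \<in> {a..b} \<Longrightarrow> norm (\<phi>' t) \<le> B"
    and "s \<in> {a..b}" "t \<in> {a..b}"
  shows "norm (\<phi> s - \<phi> t) \<le> B * \<bar>s - t\<bar>"
proof -
  have "norm (\<phi> s - \<phi> t) \<le> B * norm (s - t)"
  proof (rule differentiable_bound[of "{a..b}" \<phi> "\<lambda>x h. h *\<^sub>R \<phi>' x"])
    show "(\<phi> has_derivative (\<lambda>h. h *\<^sub>R \<phi>' x)) (at x within {a..b})" if "x \<in> {a..b}" for x
      using assms(1)[OF that] by (simp add: has_vector_derivative_def)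
    show "onorm (\<lambda>h. h *\<^sub>R \<phi>' x) \<le> B" if "x \<in> {a..b}" for x
      using assms(2)[OF that] by (intro onorm_le) (auto simp: mult.commute[of B] intro: mult_left_mono)
  qed (use assms(3,4) in auto)
  then show ?thesis by simp
qed

lemma vector_derivative_chord_lower_bound_local:
  fixes \<phi> :: "real \<Rightarrow> 'a::real_normed_vector"
  assumes deriv: "\<And>t. t \<in> {a..b} \<Longrightarrow> (\<phi> has_vector_derivative \<phi>' t) (at t within {a..b})"
    and cont: "continuous_on {a..b} \<phi>'" and nonzero: "\<And>t. t \<in> {a..b} \<Longrightarrow> \<phi>' t \<noteq> 0"
  obtains c \<delta> where "0 < c" "0 < \<delta>"
    "\<And>s t. s \<in> {a..b} \<Longrightarrow> t \<in> {a..b} \<Longrightarrow> \<bar>s - t\<bar> < \<delta> \<Longrightarrow> c * \<bar>s - t\<bar> \<le> norm (\<phi> s - \<phi> t)"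
proof -
  obtain m where m: "0 < m" "\<And>t. t \<in> {a..b} \<Longrightarrow> m \<le> norm (\<phi>' t)"
    using continuous_on_compact_pos_lower_bound[of "{a..b}" "\<lambda>t. norm (\<phi>' t)"] cont nonzero
    by (auto intro: continuous_intros)
  obtain \<delta> where \<delta>: "0 < \<delta>"
    "\<And>x t. x \<in> {a..b} \<Longrightarrow> t \<in> {a..b} \<Longrightarrow> dist x t < \<delta> \<Longrightarrow> dist (\<phi>' x) (\<phi>' t) < m / 2"
    using compact_uniformly_continuous[OF cont compact_Icc] m(1)
    unfolding uniformly_continuous_on_def by (metis half_gt_zero)
  have "m / 2 * \<bar>s - t\<bar> \<le> norm (\<phi> s - \<phi> t)"
    if st: "s \<in> {a..b}" "t \<in> {a..b}" "\<bar>s - t\<bar> < \<delta>" for s t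
  proof -
    have seg: "closed_segment t s \<subseteq> {a..b}"
      using st(1,2) by (simp add: closed_segment_subset)
    have "norm (\<phi> s - \<phi> t - (s - t) *\<^sub>R \<phi>' t) \<le> norm (s - t) * (m / 2)"
    proof (rule vector_differentiable_bound_linearization[of "closed_segment t s"])
      show "(\<phi> has_vector_derivative \<phi>' x) (at x within closed_segment t s)"
        if "x \<in> closed_segment t s" for x
        using deriv seg that by (blast intro: has_vector_derivative_within_subset)
      show "norm (\<phi>' x - \<phi>' t) \<le> m / 2" if "x \<in> closed_segment t s" for x
      proof -
        have "\<bar>x - t\<bar> \<le> \<bar>s - t\<bar>"
          using that by (auto simp: closed_segment_real_eq abs_mult mult_left_le)
        then show ?thesis
          using \<delta>(2)[of x t] seg that st by (auto simp: dist_norm)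
      qed
    qed auto
    moreover have "\<bar>s - t\<bar> * m \<le> norm ((s - t) *\<^sub>R \<phi>' t)"
      using m(2)[OF st(2)] by (simp add: mult_left_mono)
    ultimately show ?thesis
      using norm_triangle_ineq2[of "(s - t) *\<^sub>R \<phi>' t" "\<phi> s - \<phi> t"]
      by (auto simp: norm_minus_commute algebra_simps)
  qed
  then show ?thesis using that[of "m / 2" \<delta>] m(1) \<delta>(1) by auto
qed

lemma injective_vector_derivative_chord_lower_bound:
  fixes \<phi> :: "real \<Rightarrow> 'a::real_normed_vector"
  assumes deriv: "\<And>t. t \<in> {a..b} \<Longrightarrow> (\<phi> has_vector_derivative \<phi>' t) (at t within {a..b})"
    and cont: "continuous_on {a..b} \<phi>'" and nonzero: "\<And>t. t \<in> {a..b} \<Longrightarrow> \<phi>' t \<noteq> 0"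
    and inj: "inj_on \<phi> {a..b}"
  obtains c where "0 < c" "\<And>s t. s \<in> {a..b} \<Longrightarrow> t \<in> {a..b} \<Longrightarrow> c * \<bar>s - t\<bar> \<le> norm (\<phi> s - \<phi> t)"
proof -
  obtain c0 \<delta> where c0: "0 < c0" "0 < \<delta>"
    and near: "\<And>s t. s \<in> {a..b} \<Longrightarrow> t \<in> {a..b} \<Longrightarrow> \<bar>s - t\<bar> < \<delta> \<Longrightarrow> c0 * \<bar>s - t\<bar> \<le> norm (\<phi> s - \<phi> t)"
    using vector_derivative_chord_lower_bound_local[OF deriv cont nonzero] by blast
  define K where "K = ({a..b} \<times> {a..b}) \<inter> {p. \<delta> \<le> \<bar>fst p - snd p\<bar>}"
  have "continuous_on {a..b} \<phi>"
    using deriv continuous_on_vector_derivative by blast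
  then have "continuous_on K (\<lambda>p. norm (\<phi> (fst p) - \<phi> (snd p)) / \<bar>fst p - snd p\<bar>)"
    using c0(2) unfolding K_def
    by (force intro!: continuous_intros continuous_on_compose2[of "{a..b}" \<phi>])
  moreover have "compact K" unfolding K_def
    by (intro compact_Int_closed compact_Times closed_Collect_le continuous_intros) auto
  moreover have "0 < norm (\<phi> (fst p) - \<phi> (snd p)) / \<bar>fst p - snd p\<bar>" if pK: "p \<in> K" for p
  proof -
    obtain s t where p: "p = (s, t)" "s \<in> {a..b}" "t \<in> {a..b}" "\<delta> \<le> \<bar>s - t\<bar>"
      using pK by (cases p) (auto simp: K_def)
    then have "\<phi> s \<noteq> \<phi> t" using c0(2) inj_onD[OF inj] by force
    then show ?thesis using p c0(2) by auto
  qed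
  ultimately obtain c1 where c1: "0 < c1"
    "\<And>p. p \<in> K \<Longrightarrow> c1 \<le> norm (\<phi> (fst p) - \<phi> (snd p)) / \<bar>fst p - snd p\<bar>"
    using continuous_on_compact_pos_lower_bound by blast
  have "min c0 c1 * \<bar>s - t\<bar> \<le> norm (\<phi> s - \<phi> t)" if "s \<in> {a..b}" "t \<in> {a..b}" for s t
  proof (cases "\<bar>s - t\<bar> < \<delta>")
    case True
    then show ?thesis
      using near[OF that True] by (meson abs_ge_zero min.cobounded1 mult_right_mono order_trans)
  next
    case False
    then have "c1 \<le> norm (\<phi> s - \<phi> t) / \<bar>s - t\<bar>" "0 < \<bar>s - t\<bar>"
      using c1(2)[of "(s, t)"] that c0(2) by (auto simp: K_def)
    then show ?thesis
      by (smt (verit, best) min.cobounded2 mult_right_mono pos_le_divide_eq)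
  qed
  then show ?thesis using that[of "min c0 c1"] c0 c1 by auto
qed

lemma oriented_integral_fundamental:
  fixes H h :: "real \<Rightarrow> complex"
  assumes "\<And>t. t \<in> {min a b..max a b} \<Longrightarrow>
    (H has_vector_derivative h t) (at t within {min a b..max a b})"
  shows "oriented_integral a b h = H b - H a"
proof (cases "a \<le> b")
  case True
  then have "(h has_integral (H b - H a)) {a..b}"
    using assms by (intro fundamental_theorem_of_calculus) auto
  then show ?thesis using True by (simp add: oriented_integral_def integral_unique)
next
  case False
  then have "(h has_integral (H a - H b)) {b..a}"
    using assms by (intro fundamental_theorem_of_calculus) auto
  then show ?thesis using False by (simp add: oriented_integral_def integral_unique)
qed

lemma norm_oriented_integral_le:
  fixes h :: "real \<Rightarrow> complex"
  assumes "continuous_on {min a b..max a b} h" "\<And>t. t \<in> {min a b..max a b} \<Longrightarrow> norm (h t) \<le> B"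
  shows "norm (oriented_integral a b h) \<le> B * \<bar>b - a\<bar>"
  using assms integral_bound[of a b h B] integral_bound[of b a h B]
  by (cases "a \<le> b") (auto simp: oriented_integral_def)

lemma arc_integral_cmult: "arc_integral \<phi> (\<lambda>z. c * g z) a b = c * arc_integral \<phi> g a b"
  by (simp add: arc_integral_def oriented_integral_def mult.assoc)

section \<open>Derivatives along a set without isolated points\<close>

declare arc_deriv.simps(2) [simp del]

lemma arc_deriv_Suc_eq:
  assumes "z islimpt S" "(arc_deriv S j g has_field_derivative D) (at z within S)"
  shows "arc_deriv S (Suc j) g z = D"
  using assms
  by (simp add: arc_deriv.simps(2) has_field_derivative_iff tendsto_Lim trivial_limit_within)

lemma has_field_derivative_arc_deriv:
  assumes "z islimpt S" "arc_deriv_exists_upto S m g" "j < m" "z \<in> S"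
  shows "(arc_deriv S j g has_field_derivative arc_deriv S (Suc j) g z) (at z within S)"
proof -
  obtain D where "(arc_deriv S j g has_field_derivative D) (at z within S)"
    using assms(2-4) by (auto simp: arc_deriv_exists_upto_def has_field_derivative_iff)
  with arc_deriv_Suc_eq[OF assms(1)] show ?thesis by simp
qed

lemma continuous_on_arc_deriv:
  assumes "\<forall>z\<in>S. z islimpt S" "arc_deriv_exists_upto S m g" "j < m"
  shows "continuous_on S (arc_deriv S j g)"
  unfolding continuous_on_eq_continuous_within
  using has_field_derivative_arc_deriv[OF _ assms(2,3)] assms(1)
  by (blast intro: DERIV_continuous)

lemma has_field_derivative_arc_deriv_d1:
  assumes limpt: "\<forall>z\<in>S. z islimpt S" and ex: "arc_deriv_exists_upto S m g"
    and "j < m" "z \<in> S" "z \<noteq> z2"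
  shows "(arc_deriv S j (d1 g z2) has_field_derivative
      (arc_deriv S (Suc j) g z - of_nat (Suc j) * arc_deriv S j (d1 g z2) z) / (z - z2)) (at z within S)"
  using assms(3-5)
proof (induction j arbitrary: z)
  case 0
  have "((\<lambda>w. (g w - g z2) / (w - z2)) has_field_derivative
      (arc_deriv S 1 g z * (z - z2) - (g z - g z2)) / (z - z2)\<^sup>2) (at z within S)"
    using has_field_derivative_arc_deriv[of z S m g 0] limpt ex 0
    by (auto intro!: derivative_eq_intros simp: power2_eq_square)
  then show ?case
    using 0 by (simp add: d1_def power2_eq_square diff_divide_distrib)
next
  case (Suc j)
  let ?G = "\<lambda>i. arc_deriv S i (d1 g z2)" and ?F = "\<lambda>i. arc_deriv S i g"
  have G_Suc: "?G (Suc j) w = (?F (Suc j) w - of_nat (Suc j) * ?G j w) / (w - z2)"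
    if "w \<in> S" "w \<noteq> z2" for w
    using arc_deriv_Suc_eq[OF bspec[OF limpt] Suc.IH] Suc.prems(1) that by simp
  have deriv: "((\<lambda>w. (?F (Suc j) w - of_nat (Suc j) * ?G j w) / (w - z2)) has_field_derivative
      ((?F (Suc (Suc j)) z - of_nat (Suc j) * ?G (Suc j) z) * (z - z2)
        - (?F (Suc j) z - of_nat (Suc j) * ?G j z)) / (z - z2)\<^sup>2) (at z within S)"
    using has_field_derivative_arc_deriv[of z S m g "Suc j"] Suc.IH[of z] Suc.prems limpt ex G_Suc
    by (auto intro!: derivative_eq_intros simp: power2_eq_square)
  have "?F (Suc j) z - of_nat (Suc j) * ?G j z = ?G (Suc j) z * (z - z2)"
    using G_Suc[of z] Suc.prems by simp
  moreover have "((a - of_nat (Suc j) * b) * u - b * u) / u\<^sup>2 = (a - of_nat (Suc (Suc j)) * b) / u"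
    if "u \<noteq> 0" for a b u :: complex
    using that by (simp add: field_simps power2_eq_square)
  ultimately have deriv_eq: "((?F (Suc (Suc j)) z - of_nat (Suc j) * ?G (Suc j) z) * (z - z2)
        - (?F (Suc j) z - of_nat (Suc j) * ?G j z)) / (z - z2)\<^sup>2
      = (?F (Suc (Suc j)) z - of_nat (Suc (Suc j)) * ?G (Suc j) z) / (z - z2)"
    using Suc.prems by simp
  show ?case
  proof (rule has_field_derivative_transform_within[where d = "dist z z2"])
    show "0 < dist z z2" "z \<in> S" using Suc.prems by auto
    show "(?F (Suc j) x - of_nat (Suc j) * ?G j x) / (x - z2) = ?G (Suc j) x"
      if "x \<in> S" "dist x z < dist z z2" for x
    proof -
      have "x \<noteq> z2" using that(2) by (auto simp: dist_commute)
      then show ?thesis using G_Suc[OF that(1)] by simp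
    qed
  qed (use deriv deriv_eq in simp)
qed

lemma arc_deriv_d1_Suc:
  assumes "\<forall>z\<in>S. z islimpt S" "arc_deriv_exists_upto S m g" "j < m" "z \<in> S" "z \<noteq> z2"
  shows "arc_deriv S (Suc j) (d1 g z2) z
    = (arc_deriv S (Suc j) g z - of_nat (Suc j) * arc_deriv S j (d1 g z2) z) / (z - z2)"
  using arc_deriv_Suc_eq[OF _ has_field_derivative_arc_deriv_d1[OF assms]] assms by blast

lemma taylor_arc_deriv_d1:
  assumes limpt: "\<forall>z\<in>S. z islimpt S" and ex: "arc_deriv_exists_upto S m g"
    and "j < m" "z1 \<in> S" "z1 \<noteq> z2"
  shows "g z2 = (\<Sum>i\<le>j. arc_deriv S i g z1 * (z2 - z1) ^ i / fact i)
    + (z2 - z1) ^ Suc j * arc_deriv S j (d1 g z2) z1 / fact j"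
  using assms(3)
proof (induction j)
  case 0
  then show ?case using assms(5) by (simp add: d1_def field_simps)
next
  case (Suc j)
  let ?G = "\<lambda>i. arc_deriv S i (d1 g z2) z1" and ?F = "\<lambda>i. arc_deriv S i g z1"
  have "?G (Suc j) = (of_nat (Suc j) * ?G j - ?F (Suc j)) / (z2 - z1)"
    using arc_deriv_d1_Suc[OF limpt ex Suc_lessD[OF Suc.prems] assms(4,5)] assms(5)
    by (simp add: field_simps)
  then have "(z2 - z1) ^ Suc (Suc j) * ?G (Suc j) / fact (Suc j)
      = (z2 - z1) ^ Suc j * (of_nat (Suc j) * ?G j - ?F (Suc j)) / fact (Suc j)"
    using assms(5) by (simp del: of_nat_Suc)
  also have "\<dots> = (z2 - z1) ^ Suc j * ?G j / fact j - ?F (Suc j) * (z2 - z1) ^ Suc j / fact (Suc j)"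
    using of_nat_neq_0[of j, where 'a = complex] unfolding fact_Suc[of j]
    by (simp add: field_simps del: of_nat_Suc)
  finally show ?case
    using Suc by simp
qed

lemma has_field_derivative_taylor_sum:
  fixes F :: "nat \<Rightarrow> 'a::real_normed_field \<Rightarrow> 'a"
  assumes "\<And>i. i \<le> m \<Longrightarrow> (F i has_field_derivative F (Suc i) z) (at z within S)"
  shows "((\<lambda>w. \<Sum>i\<le>m. F i w * (y - w) ^ i / fact i) has_field_derivative
    F (Suc m) z * (y - z) ^ m / fact m) (at z within S)"
  using assms
proof (induction m)
  case 0
  then show ?case by simp
next
  case (Suc m)
  have power: "((\<lambda>w. (y - w) ^ Suc m) has_field_derivative - (of_nat (Suc m) * (y - z) ^ m))
      (at z within S)"
    using DERIV_power[OF DERIV_diff[OF DERIV_const DERIV_ident], of y "Suc m" z S] by simp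
  have "((\<lambda>w. (\<Sum>i\<le>m. F i w * (y - w) ^ i / fact i) + F (Suc m) w * (y - w) ^ Suc m / fact (Suc m))
    has_field_derivative F (Suc m) z * (y - z) ^ m / fact m
      + (F (Suc m) z * - (of_nat (Suc m) * (y - z) ^ m) + F (Suc (Suc m)) z * (y - z) ^ Suc m)
        / fact (Suc m)) (at z within S)"
    using Suc by (intro DERIV_add DERIV_cdivide DERIV_mult' power) simp_all
  moreover have "F (Suc m) z * (y - z) ^ m / fact m
      + (F (Suc m) z * - (of_nat (Suc m) * (y - z) ^ m) + F (Suc (Suc m)) z * (y - z) ^ Suc m)
        / fact (Suc m)
    = F (Suc (Suc m)) z * (y - z) ^ Suc m / fact (Suc m)"
    using of_nat_neq_0[of m, where 'a = 'a] unfolding fact_Suc[of m]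
    by (simp add: field_simps del: of_nat_Suc)
  ultimately show ?case by simp
qed

section \<open>Admissible arcs\<close>

locale admissible_arc =
  fixes \<phi> :: "real \<Rightarrow> complex"
  assumes admissible: "admissible_param \<phi>"
begin

abbreviation \<phi>' :: "real \<Rightarrow> complex" where
  "\<phi>' t \<equiv> vector_derivative \<phi> (at t within {0..1})"

lemma inj_on_param: "inj_on \<phi> {0..1}"
  using admissible by (simp add: admissible_param_def)

lemma param_derivative:
  "continuous_on {0..1} \<phi>'"
  "\<And>t. t \<in> {0..1} \<Longrightarrow> (\<phi> has_vector_derivative \<phi>' t) (at t within {0..1})"
  "\<And>t. t \<in> {0..1} \<Longrightarrow> \<phi>' t \<noteq> 0"
proof -
  obtain \<psi> where \<psi>: "continuous_on {0..1} \<psi>"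
    "\<And>t. t \<in> {0..1} \<Longrightarrow> (\<phi> has_vector_derivative \<psi> t) (at t within {0..1}) \<and> \<psi> t \<noteq> 0"
    using admissible by (auto simp: admissible_param_def)
  have eq: "\<phi>' t = \<psi> t" if "t \<in> {0..1}" for t
    using vector_derivative_within_cbox[of 0 1 t \<phi> "\<psi> t"] \<psi>(2) that by simp
  show "continuous_on {0..1} \<phi>'" using continuous_on_eq[OF \<psi>(1)] eq by metis
  show "(\<phi> has_vector_derivative \<phi>' t) (at t within {0..1})" "\<phi>' t \<noteq> 0" if "t \<in> {0..1}" for t
    using \<psi>(2)[OF that] eq[OF that] by auto
qed

lemma continuous_on_param: "continuous_on {0..1} \<phi>"
  using param_derivative(2) by (rule continuous_on_vector_derivative)

lemma compact_arc: "compact (\<phi> ` {0..1})"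
  by (intro compact_continuous_image continuous_on_param) simp

lemma arc_islimpt: "z \<in> \<phi> ` {0..1} \<Longrightarrow> z islimpt \<phi> ` {0..1}"
proof -
  assume "z \<in> \<phi> ` {0..1}"
  then obtain t where t: "t \<in> {0..1}" "z = \<phi> t" by blast
  have "\<phi> -` (\<phi> ` {0..1} - {z}) \<inter> {0..1} = {0..1} - {t}"
    using t inj_on_param by (auto simp: inj_on_def)
  moreover have "t islimpt {0..1::real} - {t}"
    using t islimpt_Icc[of 0 1 t] by (auto simp: islimpt_def)
  ultimately have "z islimpt \<phi> ` {0..1} - {z}"
    using islimpt_image[of t \<phi> "\<phi> ` {0..1} - {z}" "{0..1}"] t continuous_on_param by auto
  then show ?thesis by (rule islimpt_subset) auto
qed

lemma param_lipschitz:
  obtains L where "0 < L" "\<And>t. t \<in> {0..1} \<Longrightarrow> norm (\<phi>' t) \<le> L"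
    "\<And>s t. s \<in> {0..1} \<Longrightarrow> t \<in> {0..1} \<Longrightarrow> norm (\<phi> s - \<phi> t) \<le> L * \<bar>s - t\<bar>"
proof -
  have "bounded (\<phi>' ` {0..1})"
    by (intro compact_imp_bounded compact_continuous_image param_derivative) simp
  then obtain L where L: "0 < L" "\<And>t. t \<in> {0..1} \<Longrightarrow> norm (\<phi>' t) \<le> L"
    unfolding bounded_pos by blast
  show ?thesis
    using vector_derivative_lipschitz[OF param_derivative(2) L(2)] by (intro that[OF L]) auto
qed

lemma param_chord_lower_bound:
  obtains c where "0 < c" "\<And>s t. s \<in> {0..1} \<Longrightarrow> t \<in> {0..1} \<Longrightarrow> c * \<bar>s - t\<bar> \<le> norm (\<phi> s - \<phi> t)"
  using injective_vector_derivative_chord_lower_bound[OF param_derivative(2,1,3) inj_on_param] by blast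

lemma arc_param_param: "t \<in> {0..1} \<Longrightarrow> arc_param \<phi> (\<phi> t) = t"
  unfolding arc_param_def by (rule the_equality) (use inj_on_param in \<open>auto simp: inj_on_def\<close>)

lemma arc_integral_param:
  "t1 \<in> {0..1} \<Longrightarrow> t2 \<in> {0..1} \<Longrightarrow>
    arc_integral \<phi> g (\<phi> t2) (\<phi> t1) = oriented_integral t2 t1 (\<lambda>t. g (\<phi> t) * \<phi>' t)"
  by (simp add: arc_integral_def arc_param_param)

lemma taylor_arc_integral:
  assumes ex: "arc_deriv_exists_upto (\<phi> ` {0..1}) N f" and "m < N"
    and "z1 \<in> \<phi> ` {0..1}" "z2 \<in> \<phi> ` {0..1}"
  shows "arc_integral \<phi> (\<lambda>z. arc_deriv (\<phi> ` {0..1}) (Suc m) f z * (z2 - z) ^ m / fact m) z2 z1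
    = (\<Sum>i\<le>m. arc_deriv (\<phi> ` {0..1}) i f z1 * (z2 - z1) ^ i / fact i) - f z2"
proof -
  let ?F = "\<lambda>i. arc_deriv (\<phi> ` {0..1}) i f"
  define P where "P w = (\<Sum>i\<le>m. ?F i w * (z2 - w) ^ i / fact i)" for w
  obtain t1 t2 where t: "t1 \<in> {0..1}" "t2 \<in> {0..1}" "z1 = \<phi> t1" "z2 = \<phi> t2"
    using assms(3,4) by auto
  have deriv: "((P \<circ> \<phi>) has_vector_derivative \<phi>' t * (?F (Suc m) (\<phi> t) * (z2 - \<phi> t) ^ m / fact m))
      (at t within {0..1})" if "t \<in> {0..1}" for t
    unfolding P_def using that ex assms(2)
    by (intro field_vector_diff_chain_within param_derivative(2) has_field_derivative_taylor_sum
        has_field_derivative_arc_deriv arc_islimpt) auto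
  then have "oriented_integral t2 t1 (\<lambda>t. \<phi>' t * (?F (Suc m) (\<phi> t) * (z2 - \<phi> t) ^ m / fact m))
      = (P \<circ> \<phi>) t1 - (P \<circ> \<phi>) t2"
    using t(1,2)
    by (intro oriented_integral_fundamental has_vector_derivative_within_subset[OF deriv]) auto
  moreover have "P z2 = f z2"
    using sum_zero_power[of "\<lambda>i. ?F i z2 / fact i" "{..m}"] by (simp add: P_def)
  ultimately show ?thesis
    using t by (simp add: arc_integral_param P_def mult.commute)
qed

lemma d1k_integral_remainder:
  assumes ex: "arc_deriv_exists_upto (\<phi> ` {0..1}) N f" and "k + 1 < N"
    and z: "z1 \<in> \<phi> ` {0..1}" "z2 \<in> \<phi> ` {0..1}" "z1 \<noteq> z2"
  shows "d1k (\<phi> ` {0..1}) k f z1 z2 = (arc_deriv (\<phi> ` {0..1}) (k + 1) f z1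
    - arc_integral \<phi> (\<lambda>z. (z - z2) ^ (k + 1) * arc_deriv (\<phi> ` {0..1}) (k + 2) f z) z2 z1
      / (z1 - z2) ^ (k + 1)) / of_nat (k + 1)"
proof -
  let ?F = "\<lambda>i. arc_deriv (\<phi> ` {0..1}) i f"
  define I where "I = arc_integral \<phi> (\<lambda>z. (z - z2) ^ Suc k * ?F (Suc (Suc k)) z) z2 z1"
  define T where "T = (\<Sum>i\<le>k. ?F i z1 * (z2 - z1) ^ i / fact i)"
  define s :: complex where "s = (- 1) ^ Suc k"
  have flip: "(z2 - z) ^ Suc k = s * (z - z2) ^ Suc k" for z
    unfolding s_def by (metis minus_diff_eq power_minus)
  have "k < N" "Suc k < N" using assms(2) by auto
  from taylor_arc_deriv_d1[OF ballI[OF arc_islimpt] ex this(1) z(1,3)]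
  have "f z2 = T + s * (z1 - z2) ^ Suc k * d1k (\<phi> ` {0..1}) k f z1 z2 / fact k"
    unfolding T_def d1k_def flip by simp
  moreover have "s / fact (Suc k) * I
      = T + ?F (Suc k) z1 * (s * (z1 - z2) ^ Suc k) / fact (Suc k) - f z2"
  proof -
    have integrand: "(\<lambda>z. ?F (Suc (Suc k)) z * (z2 - z) ^ Suc k / fact (Suc k))
        = (\<lambda>z. s / fact (Suc k) * ((z - z2) ^ Suc k * ?F (Suc (Suc k)) z))"
      unfolding flip by (simp add: fun_eq_iff)
    from taylor_arc_integral[OF ex \<open>Suc k < N\<close> z(1,2)] show ?thesis
      unfolding integrand arc_integral_cmult I_def[symmetric]
      unfolding sum.atMost_Suc flip T_def .
  qed
  moreover have "s \<noteq> 0" "(z1 - z2) ^ Suc k \<noteq> 0" "(fact k :: complex) \<noteq> 0" "(of_nat (Suc k) :: complex) \<noteq> 0"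
    using z(3) by (auto simp: s_def simp del: of_nat_Suc)
  moreover have "g = (a - i / u) / n"
    if "y = t + s * u * g / c" "s / (n * c) * i = t + a * (s * u) / (n * c) - y"
      "s \<noteq> 0" "u \<noteq> 0" "c \<noteq> 0" "n \<noteq> 0" for y t s u g c a i n :: complex
  proof -
    have "c * s * i = c * s * (a * u - n * u * g)"
      using that(2)[unfolded that(1)] that(3-6) by (simp add: field_simps)
    then have "i = a * u - n * u * g" using that(3,5) by simp
    then show ?thesis using that(3-6) by (simp add: field_simps)
  qed
  ultimately have "d1k (\<phi> ` {0..1}) k f z1 z2 = (?F (Suc k) z1 - I / (z1 - z2) ^ Suc k) / of_nat (Suc k)"
    unfolding fact_Suc[of k] by blast
  then show ?thesis by (simp add: I_def)
qed

lemma bdd_above_arc_integral_remainder: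
  assumes "continuous_on (\<phi> ` {0..1}) g"
  shows "bdd_above ((\<lambda>(z1, z2). norm (arc_integral \<phi> (\<lambda>z. (z - z2) ^ p * g z) z2 z1 / (z1 - z2) ^ p))
    ` {(z1, z2). z1 \<in> \<phi> ` {0..1} \<and> z2 \<in> \<phi> ` {0..1} \<and> z1 \<noteq> z2})"
proof -
  obtain L where L: "0 < L" "\<And>t. t \<in> {0..1} \<Longrightarrow> norm (\<phi>' t) \<le> L"
    "\<And>s t. s \<in> {0..1} \<Longrightarrow> t \<in> {0..1} \<Longrightarrow> norm (\<phi> s - \<phi> t) \<le> L * \<bar>s - t\<bar>"
    using param_lipschitz by blast
  obtain c where c: "0 < c" "\<And>s t. s \<in> {0..1} \<Longrightarrow> t \<in> {0..1} \<Longrightarrow> c * \<bar>s - t\<bar> \<le> norm (\<phi> s - \<phi> t)"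
    using param_chord_lower_bound by blast
  obtain M where M: "0 < M" "\<And>z. z \<in> \<phi> ` {0..1} \<Longrightarrow> norm (g z) \<le> M"
    using compact_imp_bounded[OF compact_continuous_image[OF assms compact_arc]]
    unfolding bounded_pos by blast
  have "norm (arc_integral \<phi> (\<lambda>z. (z - \<phi> t2) ^ p * g z) (\<phi> t2) (\<phi> t1) / (\<phi> t1 - \<phi> t2) ^ p)
      \<le> (L / c) ^ p * M * L"
    if t: "t1 \<in> {0..1}" "t2 \<in> {0..1}" "\<phi> t1 \<noteq> \<phi> t2" for t1 t2
  proof -
    define d where "d = \<bar>t1 - t2\<bar>"
    have d: "0 < d" "d \<le> 1" using t by (auto simp: d_def)
    define h where "h t = (\<phi> t - \<phi> t2) ^ p * g (\<phi> t) * \<phi>' t" for t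
    have J: "{min t2 t1..max t2 t1} \<subseteq> {0..1}" using t by auto
    have integral: "arc_integral \<phi> (\<lambda>z. (z - \<phi> t2) ^ p * g z) (\<phi> t2) (\<phi> t1) = oriented_integral t2 t1 h"
      using t by (simp add: arc_integral_param h_def[abs_def])
    have cont: "continuous_on {0..1} h"
      unfolding h_def using assms continuous_on_param param_derivative(1)
      by (auto intro!: continuous_intros continuous_on_compose2[of "\<phi> ` {0..1}" g])
    have bound: "norm (h s) \<le> (L * d) ^ p * M * L" if "s \<in> {min t2 t1..max t2 t1}" for s
    proof -
      have "s \<in> {0..1}" "\<bar>s - t2\<bar> \<le> d" using that J by (auto simp: d_def)
      then have "norm (\<phi> s - \<phi> t2) \<le> L * d"
        using L(1) L(3)[of s t2] t(2) by (meson mult_left_mono less_imp_le order_trans)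
      then show ?thesis
        using \<open>s \<in> {0..1}\<close> L(1,2) M d(1) by (auto simp: h_def norm_mult norm_power intro!: mult_mono power_mono)
    qed
    have "norm (arc_integral \<phi> (\<lambda>z. (z - \<phi> t2) ^ p * g z) (\<phi> t2) (\<phi> t1)) \<le> (L * d) ^ p * M * L * d"
      using norm_oriented_integral_le[OF continuous_on_subset[OF cont J] bound]
      by (simp add: integral d_def abs_minus_commute)
    moreover have "(c * d) ^ p \<le> norm (\<phi> t1 - \<phi> t2) ^ p"
      using c d t by (intro power_mono) (auto simp: d_def)
    ultimately have "norm (arc_integral \<phi> (\<lambda>z. (z - \<phi> t2) ^ p * g z) (\<phi> t2) (\<phi> t1) / (\<phi> t1 - \<phi> t2) ^ p)
        \<le> (L * d) ^ p * M * L * d / (c * d) ^ p"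
      using c(1) d(1) L(1) M(1) by (auto simp: norm_divide norm_power intro!: frac_le)
    also have "\<dots> = (L / c) ^ p * M * L * d"
      using c(1) d(1) by (simp add: power_mult_distrib power_divide field_simps)
    also have "\<dots> \<le> (L / c) ^ p * M * L"
      using d L(1) c(1) M(1) by (simp add: mult_left_le)
    finally show ?thesis .
  qed
  then show ?thesis
    by (intro bdd_aboveI2[where M = "(L / c) ^ p * M * L"]) auto
qed

end

theorem lemma4:
  fixes \<phi> :: "real \<Rightarrow> complex" and f :: "complex \<Rightarrow> complex" and n :: nat
  defines "\<gamma> \<equiv> \<phi> ` {0..1}"
  assumes n: "n \<ge> 2"
    and adm: "admissible_param \<phi>"
    and ex: "arc_deriv_exists_upto \<gamma> (n + 1) f"
    and cont: "continuous_on \<gamma> (arc_deriv \<gamma> (n + 1) f)"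
  shows "\<forall>k\<in>{1..n-1}.
     bdd_above ((\<lambda>z. norm (arc_deriv \<gamma> (k + 1) f z)) ` \<gamma>) \<and>
     bdd_above ((\<lambda>(z1, z2). norm (arc_integral \<phi> (\<lambda>z. (z - z2) ^ (k + 1) * arc_deriv \<gamma> (k + 2) f z) z2 z1
                                   / (z1 - z2) ^ (k + 1)))
                ` {(z1, z2). z1 \<in> \<gamma> \<and> z2 \<in> \<gamma> \<and> z1 \<noteq> z2}) \<and>
     (\<forall>z1\<in>\<gamma>. \<forall>z2\<in>\<gamma>. z1 \<noteq> z2 \<longrightarrow>
        norm (d1k \<gamma> k f z1 z2) \<le>
          ((SUP z\<in>\<gamma>. norm (arc_deriv \<gamma> (k + 1) f z)) +
           (SUP p\<in>{(z1, z2). z1 \<in> \<gamma> \<and> z2 \<in> \<gamma> \<and> z1 \<noteq> z2}.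
              (case p of (z1, z2) \<Rightarrow>
                 norm (arc_integral \<phi> (\<lambda>z. (z - z2) ^ (k + 1) * arc_deriv \<gamma> (k + 2) f z) z2 z1
                       / (z1 - z2) ^ (k + 1))))) / real (k + 1))"
proof
  interpret admissible_arc \<phi> by (rule admissible_arc.intro[OF adm])
  fix k assume k: "k \<in> {1..n-1}"
  let ?F = "\<lambda>j. arc_deriv \<gamma> j f"
  define P where "P = {(z1, z2). z1 \<in> \<gamma> \<and> z2 \<in> \<gamma> \<and> z1 \<noteq> z2}"
  define R where "R = (\<lambda>(z1, z2). norm (arc_integral \<phi> (\<lambda>z. (z - z2) ^ (k + 1) * ?F (k + 2) z) z2 z1
    / (z1 - z2) ^ (k + 1)))"
  have F_cont: "continuous_on \<gamma> (?F j)" if "j \<le> n + 1" for j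
    using continuous_on_arc_deriv[OF _ ex, of j] arc_islimpt cont that
    by (cases "j = n + 1") (auto simp: \<gamma>_def)
  have bdd_F: "bdd_above ((\<lambda>z. norm (?F (k + 1) z)) ` \<gamma>)"
    using k n compact_arc unfolding \<gamma>_def[symmetric]
    by (intro bounded_imp_bdd_above compact_imp_bounded compact_continuous_image
        continuous_on_norm F_cont) auto
  have kn: "k + 1 < n + 1" "k + 2 \<le> n + 1" using k n by auto
  from bdd_above_arc_integral_remainder[OF F_cont[OF kn(2), unfolded \<gamma>_def], of "k + 1"]
  have bdd_R: "bdd_above (R ` P)"
    unfolding P_def R_def \<gamma>_def .
  have "norm (d1k \<gamma> k f z1 z2) \<le> ((SUP z\<in>\<gamma>. norm (?F (k + 1) z)) + (SUP p\<in>P. R p)) / real (k + 1)"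
    if z: "z1 \<in> \<gamma>" "z2 \<in> \<gamma>" "z1 \<noteq> z2" for z1 z2
  proof -
    have "norm (d1k \<gamma> k f z1 z2) = norm (?F (k + 1) z1 - arc_integral \<phi> (\<lambda>z. (z - z2) ^ (k + 1) * ?F (k + 2) z) z2 z1
        / (z1 - z2) ^ (k + 1)) / real (k + 1)"
      using d1k_integral_remainder[OF ex[unfolded \<gamma>_def] kn(1) z[unfolded \<gamma>_def]]
      unfolding \<gamma>_def by (simp only: norm_divide norm_of_nat)
    also have "\<dots> \<le> (norm (?F (k + 1) z1) + R (z1, z2)) / real (k + 1)"
      by (intro divide_right_mono norm_triangle_ineq4[THEN order_trans]) (simp_all add: R_def)
    also have "\<dots> \<le> ((SUP z\<in>\<gamma>. norm (?F (k + 1) z)) + (SUP p\<in>P. R p)) / real (k + 1)"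
      using z by (intro divide_right_mono add_mono cSUP_upper bdd_F bdd_R) (auto simp: P_def)
    finally show ?thesis .
  qed
  with bdd_F bdd_R show "bdd_above ((\<lambda>z. norm (?F (k + 1) z)) ` \<gamma>) \<and> bdd_above (R ` P) \<and>
      (\<forall>z1\<in>\<gamma>. \<forall>z2\<in>\<gamma>. z1 \<noteq> z2 \<longrightarrow>
        norm (d1k \<gamma> k f z1 z2) \<le> ((SUP z\<in>\<gamma>. norm (?F (k + 1) z)) + (SUP p\<in>P. R p)) / real (k + 1))"
    by blast
qed

end
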